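(* Let $\sigma$ be a profile of (mixed) strategies in a $k$-player alternating move game, with utility vector $(t_1,\dots,t_k)$. Then for every $\alpha>0$ there exists a cyclic path in the game graph $G$ whose average weight is at least $t_i-\alpha$ in every dimension $i$.
   Context: A $k$-player alternating move game has finite action sets $A_1,\dots,A_k$ and utilities $u_i:A_1\times\dots\times A_k\to[-1,1]$. In round $t$ player $j=1+(t\bmod k)$ chooses an action; the action vector $a^t$ consists of each player's most recent action; in round $t$ player $i$ receives $u_i(a^t)$ (utility $0$ in the first $k$ rounds). A mixed strategy maps histories to distributions over the player's actions. For a profile $\sigma$, $P_{i,t}(\sigma)$ is the expected value of $\frac1t\sum_{s=1}^t u_i(a^s)$, and player $i$'s utility is $t_i=\liminf_{t\to\infty}P_{i,t}(\sigma)$. The game graph $G$ has vertex set $(A_1\times\dots\times A_k)\times\{1,\dots,k\}$; there is an edge from $(\vec a,i)$ to $(\vec b,i+1)$ (with $k+1$ read as $1$) iff $\vec a$ and $\vec b$ differ at most in coordinate $i$, with weight vector $(u_1(\vec b),\dots,u_k(\vec b))$. A cyclic path is a finite path starting and ending at the same vertex; its average weight in dimension $i$ is the sum of the $i$-th weights of its edges divided by its length. *)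

theory Defs
  imports "HOL-Probability.Probability"
begin

text \<open>Players are indexed 0,...,k-1 (paper: 1,...,k). Rounds are numbered 1,2,...;
  in round t player (t mod k) moves (paper: player 1 + (t mod k)).
  A history is the list of actions chosen so far, entry number r (0-based)
  being the action chosen in round r+1.\<close>

definition mover :: "nat \<Rightarrow> nat \<Rightarrow> nat" where
  "mover k t = t mod k"

definition recent_action :: "nat \<Rightarrow> 'a list \<Rightarrow> nat \<Rightarrow> 'a" where
  "recent_action k h j = last [h ! r. r \<leftarrow> [0..<length h], mover k (r + 1) = j]"

definition action_vector :: "nat \<Rightarrow> 'a list \<Rightarrow> nat \<Rightarrow> 'a" where
  "action_vector k h = (\<lambda>j. if j < k then recent_action k h j else undefined)"

definition round_utility ::
  "nat \<Rightarrow> (nat \<Rightarrow> (nat \<Rightarrow> 'a) \<Rightarrow> real) \<Rightarrow> nat \<Rightarrow> 'a list \<Rightarrow> real" where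
  "round_utility k u i h = (if length h \<le> k then 0 else u i (action_vector k h))"

text \<open>A mixed strategy profile: sigma j h is the distribution of player j's action
  after history h.\<close>
definition mixed_profile ::
  "nat \<Rightarrow> (nat \<Rightarrow> 'a set) \<Rightarrow> (nat \<Rightarrow> 'a list \<Rightarrow> 'a pmf) \<Rightarrow> bool" where
  "mixed_profile k A \<sigma> \<longleftrightarrow> (\<forall>j<k. \<forall>h. set_pmf (\<sigma> j h) \<subseteq> A j)"

fun history_pmf :: "nat \<Rightarrow> (nat \<Rightarrow> 'a list \<Rightarrow> 'a pmf) \<Rightarrow> nat \<Rightarrow> 'a list pmf" where
  "history_pmf k \<sigma> 0 = return_pmf []"
| "history_pmf k \<sigma> (Suc t) =
     bind_pmf (history_pmf k \<sigma> t) (\<lambda>h. map_pmf (\<lambda>x. h @ [x]) (\<sigma> (mover k (Suc t)) h))"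

definition avg_payoff ::
  "nat \<Rightarrow> (nat \<Rightarrow> (nat \<Rightarrow> 'a) \<Rightarrow> real) \<Rightarrow> (nat \<Rightarrow> 'a list \<Rightarrow> 'a pmf) \<Rightarrow> nat \<Rightarrow> nat \<Rightarrow> real" where
  "avg_payoff k u \<sigma> i t =
     measure_pmf.expectation (history_pmf k \<sigma> t)
       (\<lambda>h. (1 / real t) * (\<Sum>s\<in>{1..t}. round_utility k u i (take s h)))"

definition game_utility ::
  "nat \<Rightarrow> (nat \<Rightarrow> (nat \<Rightarrow> 'a) \<Rightarrow> real) \<Rightarrow> (nat \<Rightarrow> 'a list \<Rightarrow> 'a pmf) \<Rightarrow> nat \<Rightarrow> ereal" where
  "game_utility k u \<sigma> i = liminf (\<lambda>t. ereal (avg_payoff k u \<sigma> i t))"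

definition gg_vertex :: "nat \<Rightarrow> (nat \<Rightarrow> 'a set) \<Rightarrow> ((nat \<Rightarrow> 'a) \<times> nat) \<Rightarrow> bool" where
  "gg_vertex k A v \<longleftrightarrow> fst v \<in> (\<Pi>\<^sub>E j\<in>{..<k}. A j) \<and> snd v < k"

definition gg_edge :: "nat \<Rightarrow> (nat \<Rightarrow> 'a set) \<Rightarrow> ((nat \<Rightarrow> 'a) \<times> nat) \<Rightarrow> ((nat \<Rightarrow> 'a) \<times> nat) \<Rightarrow> bool" where
  "gg_edge k A v w \<longleftrightarrow> gg_vertex k A v \<and> gg_vertex k A w \<and>
     snd w = (snd v + 1) mod k \<and> (\<forall>j. j \<noteq> snd v \<longrightarrow> fst v j = fst w j)"

definition cyclic_path :: "nat \<Rightarrow> (nat \<Rightarrow> 'a set) \<Rightarrow> ((nat \<Rightarrow> 'a) \<times> nat) list \<Rightarrow> bool" where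
  "cyclic_path k A p \<longleftrightarrow> length p \<ge> 2 \<and> hd p = last p \<and>
     (\<forall>j. j + 1 < length p \<longrightarrow> gg_edge k A (p ! j) (p ! (j + 1)))"

text \<open>Average weight in dimension i: the weight of the edge into (b, _) is u i b.\<close>
definition avg_weight ::
  "(nat \<Rightarrow> (nat \<Rightarrow> 'a) \<Rightarrow> real) \<Rightarrow> ((nat \<Rightarrow> 'a) \<times> nat) list \<Rightarrow> nat \<Rightarrow> real" where
  "avg_weight u p i = (\<Sum>j<length p - 1. u i (fst (p ! (j + 1)))) / real (length p - 1)"

end

theory Submission
  imports Defs
begin

text \<open>Choose \<open>t\<close>, a multiple of \<open>k\<close>, so large that every expected average payoff
  \<open>P i t\<close> exceeds the utility of player \<open>i\<close> minus \<open>\<alpha>/2\<close> and \<open>k\<close> is negligible against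
  \<open>t\<close>. Each history \<open>h\<close> of the first \<open>t\<close> rounds traces a walk in \<open>G\<close>; joining its ends
  to a fixed vertex by walks of length \<open>k\<close> gives a cycle of length \<open>t + k\<close> whose weight
  is the utility realised along \<open>h\<close> up to \<open>2k\<close>. Concatenating these cycles, each repeated
  a number of times proportional to a rational approximation of the probability of \<open>h\<close>,
  yields one cycle whose average weight is close to the expectation \<open>P i t\<close> in all
  coordinates at once.\<close>

lemma scaled_rounding_inequality:
  fixes q \<epsilon> M c N :: real
  assumes q: "\<bar>q\<bar> \<le> 1" and \<epsilon>: "\<epsilon> > 0" and c: "c \<ge> 0" and M: "c * (2 + \<epsilon>) \<le> M * \<epsilon>"
    and N: "M - c \<le> N" "N \<le> M"
  shows "(q - \<epsilon>) * N \<le> M * q - c"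
proof -
  have M': "2 * c + c * \<epsilon> \<le> M * \<epsilon>" using M by (simp add: algebra_simps)
  have "c * \<epsilon> \<ge> 0" using c \<epsilon> by simp
  consider "q - \<epsilon> \<ge> 0" | "q - \<epsilon> < 0" by linarith
  then show ?thesis
  proof cases
    case 1
    then have "(q - \<epsilon>) * N \<le> (q - \<epsilon>) * M" using N by (intro mult_left_mono) auto
    moreover have "(q - \<epsilon>) * M = M * q - M * \<epsilon>" by (simp add: algebra_simps)
    ultimately show ?thesis using M' c \<open>c * \<epsilon> \<ge> 0\<close> by linarith
  next
    case 2
    then have "(q - \<epsilon>) * N \<le> (q - \<epsilon>) * (M - c)" using N by (intro mult_left_mono_neg) auto
    moreover have "(q - \<epsilon>) * (M - c) = M * q - M * \<epsilon> - q * c + \<epsilon> * c"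
      by (simp add: algebra_simps)
    moreover have "- q * c \<le> 1 * c" using q c by (intro mult_right_mono) auto
    ultimately show ?thesis using M' by (simp add: algebra_simps)
  qed
qed

text \<open>Scale the weights by a large \<open>M\<close> and round down: in total and in every
  coordinate the rounding loses at most \<open>card H\<close>, which is small compared with \<open>M\<close>.\<close>
lemma nat_weights_approx_convex_combination:
  fixes H :: "'b set" and p :: "'b \<Rightarrow> real" and x :: "'b \<Rightarrow> nat \<Rightarrow> real" and I :: "nat set"
  assumes fin: "finite H" and p_nonneg: "\<And>h. h \<in> H \<Longrightarrow> p h \<ge> 0" and p_sum: "sum p H = 1"
    and x_bound: "\<And>h i. h \<in> H \<Longrightarrow> i \<in> I \<Longrightarrow> \<bar>x h i\<bar> \<le> 1" and \<epsilon>: "\<epsilon> > 0"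
  shows "\<exists>n::'b \<Rightarrow> nat. sum n H > 0 \<and>
     (\<forall>i\<in>I. (\<Sum>h\<in>H. real (n h) * x h i) \<ge> ((\<Sum>h\<in>H. p h * x h i) - \<epsilon>) * real (sum n H))"
proof -
  define c where "c = real (card H)"
  define M where "M = c * (2 + \<epsilon>) / \<epsilon> + c + 1"
  have c: "c \<ge> 0" by (simp add: c_def)
  have M: "c * (2 + \<epsilon>) \<le> M * \<epsilon>" using \<epsilon> c by (simp add: M_def field_simps)
  have "c * (2 + \<epsilon>) / \<epsilon> \<ge> 0" using \<epsilon> c by simp
  then have M_gt: "M \<ge> c + 1" by (simp add: M_def)
  define n where "n h = nat \<lfloor>M * p h\<rfloor>" for h
  have n: "M * p h - 1 \<le> real (n h) \<and> real (n h) \<le> M * p h" if "h \<in> H" for h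
  proof -
    have "M * p h \<ge> 0" using p_nonneg[OF that] M_gt c by simp
    then show ?thesis unfolding n_def by linarith
  qed
  have N: "M - c \<le> real (sum n H)" "real (sum n H) \<le> M"
  proof -
    have "M - c = (\<Sum>h\<in>H. M * p h - 1)"
      using p_sum by (simp add: sum_subtractf sum_distrib_left[symmetric] c_def)
    also have "\<dots> \<le> real (sum n H)" using n by (simp add: sum_mono)
    finally show "M - c \<le> real (sum n H)" .
    have "real (sum n H) \<le> (\<Sum>h\<in>H. M * p h)" using n by (simp add: sum_mono)
    also have "\<dots> = M" using p_sum by (simp add: sum_distrib_left[symmetric])
    finally show "real (sum n H) \<le> M" .
  qed
  have "(\<Sum>h\<in>H. real (n h) * x h i) \<ge> ((\<Sum>h\<in>H. p h * x h i) - \<epsilon>) * real (sum n H)"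
    if i: "i \<in> I" for i
  proof -
    define q where "q = (\<Sum>h\<in>H. p h * x h i)"
    have "M * q - c = (\<Sum>h\<in>H. M * p h * x h i - 1)"
      by (simp add: q_def sum_subtractf sum_distrib_left c_def mult.assoc)
    also have "\<dots> \<le> (\<Sum>h\<in>H. real (n h) * x h i)"
    proof (rule sum_mono)
      fix h assume h: "h \<in> H"
      have "\<bar>M * p h - real (n h)\<bar> * \<bar>x h i\<bar> \<le> 1 * 1"
        using n[OF h] x_bound[OF h i] by (intro mult_mono) auto
      then have "\<bar>(M * p h - real (n h)) * x h i\<bar> \<le> 1" by (simp add: abs_mult)
      then show "M * p h * x h i - 1 \<le> real (n h) * x h i"
        by (simp add: algebra_simps abs_le_iff)
    qed
    finally have "M * q - c \<le> (\<Sum>h\<in>H. real (n h) * x h i)" .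
    moreover have "\<bar>q\<bar> \<le> 1"
    proof -
      have "\<bar>q\<bar> \<le> (\<Sum>h\<in>H. \<bar>p h * x h i\<bar>)" unfolding q_def by (rule sum_abs)
      also have "\<dots> \<le> (\<Sum>h\<in>H. p h)"
        using p_nonneg x_bound i by (intro sum_mono) (auto simp: abs_mult intro: mult_left_le)
      finally show ?thesis using p_sum by simp
    qed
    ultimately show ?thesis
      using scaled_rounding_inequality[OF _ \<epsilon> c M N] unfolding q_def by fastforce
  qed
  moreover have "sum n H > 0" using N M_gt by linarith
  ultimately show ?thesis by blast
qed

text \<open>A walk from \<open>v\<close> to \<open>w\<close> is recorded by the vertices it enters after \<open>v\<close>, so
  that its edge weights are the utilities at the listed profiles.\<close>
definition gg_walk :: "nat \<Rightarrow> (nat \<Rightarrow> 'a set) \<Rightarrow> (nat \<Rightarrow> 'a) \<times> nat \<Rightarrow>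
    ((nat \<Rightarrow> 'a) \<times> nat) list \<Rightarrow> (nat \<Rightarrow> 'a) \<times> nat \<Rightarrow> bool" where
  "gg_walk k A v xs w \<longleftrightarrow> successively (gg_edge k A) (v # xs) \<and> last (v # xs) = w"

definition walk_weight :: "(nat \<Rightarrow> (nat \<Rightarrow> 'a) \<Rightarrow> real) \<Rightarrow> ((nat \<Rightarrow> 'a) \<times> nat) list \<Rightarrow> nat \<Rightarrow> real" where
  "walk_weight u xs i = (\<Sum>x\<leftarrow>xs. u i (fst x))"

lemma gg_walk_Nil: "gg_walk k A v [] v"
  by (simp add: gg_walk_def)

lemma gg_walk_append:
  assumes "gg_walk k A v xs w" "gg_walk k A w ys z"
  shows "gg_walk k A v (xs @ ys) z"
proof -
  have "successively (gg_edge k A) (v # xs)" "last (v # xs) = w"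
    "successively (gg_edge k A) ys" "ys \<noteq> [] \<Longrightarrow> gg_edge k A w (hd ys)" "last (w # ys) = z"
    using assms by (auto simp: gg_walk_def successively_Cons)
  then have "successively (gg_edge k A) ((v # xs) @ ys)" "last ((v # xs) @ ys) = z"
    unfolding successively_append_iff by (auto split: if_splits)
  then show ?thesis by (simp add: gg_walk_def)
qed

lemma gg_walk_concat: "(\<And>xs. xs \<in> set L \<Longrightarrow> gg_walk k A v xs v) \<Longrightarrow> gg_walk k A v (concat L) v"
  by (induction L) (auto simp: gg_walk_Nil intro: gg_walk_append)

lemma gg_walk_map_upt:
  assumes "\<And>m. a \<le> m \<Longrightarrow> m < b \<Longrightarrow> gg_edge k A (f m) (f (Suc m))" "a \<le> b"
  shows "gg_walk k A (f a) (map f [Suc a..<Suc b]) (f b)"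
  using assms
proof (induction b)
  case (Suc b)
  show ?case
  proof (cases "a = Suc b")
    case False
    then have "gg_walk k A (f a) (map f [Suc a..<Suc b]) (f b)" using Suc by auto
    moreover have "gg_walk k A (f b) [f (Suc b)] (f (Suc b))"
      using Suc.prems False by (simp add: gg_walk_def)
    ultimately have "gg_walk k A (f a) (map f [Suc a..<Suc b] @ [f (Suc b)]) (f (Suc b))"
      by (rule gg_walk_append)
    then show ?thesis using Suc.prems False by simp
  qed (simp add: gg_walk_Nil)
qed (simp add: gg_walk_Nil)

lemma gg_walk_vertex: "gg_walk k A v xs w \<Longrightarrow> x \<in> set xs \<Longrightarrow> gg_vertex k A x"
  by (induction xs arbitrary: v) (auto simp: gg_walk_def gg_edge_def)

lemma walk_weight_append: "walk_weight u (xs @ ys) i = walk_weight u xs i + walk_weight u ys i"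
  by (simp add: walk_weight_def)

lemma walk_weight_concat: "walk_weight u (concat L) i = (\<Sum>xs\<leftarrow>L. walk_weight u xs i)"
  by (induction L) (simp_all add: walk_weight_def)

lemma walk_weight_concat_replicate:
  "walk_weight u (concat (replicate n xs)) i = real n * walk_weight u xs i"
  by (simp add: walk_weight_concat sum_list_replicate)

lemma abs_walk_weight_le:
  assumes walk: "gg_walk k A v xs w" and i: "i < k"
    and u_bound: "\<And>i a. i < k \<Longrightarrow> a \<in> (\<Pi>\<^sub>E j\<in>{..<k}. A j) \<Longrightarrow> \<bar>u i a\<bar> \<le> 1"
  shows "\<bar>walk_weight u xs i\<bar> \<le> real (length xs)"
proof -
  have "\<bar>u i (fst x)\<bar> \<le> 1" if "x \<in> set xs" for x
    using gg_walk_vertex[OF walk that] u_bound[OF i] by (simp add: gg_vertex_def)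
  then have "(\<Sum>x\<leftarrow>xs. \<bar>u i (fst x)\<bar>) \<le> (\<Sum>x\<leftarrow>xs. 1)" by (rule sum_list_mono)
  then show ?thesis
    unfolding walk_weight_def using sum_list_abs[of "map (\<lambda>x. u i (fst x)) xs"]
    by (simp add: o_def sum_list_triv)
qed

lemma cyclic_path_closed_walk:
  assumes "gg_walk k A v xs v" "xs \<noteq> []"
  shows "cyclic_path k A (v # xs)"
  using assms unfolding cyclic_path_def gg_walk_def
  by (auto simp: successively_conv_nth Suc_le_eq simp del: successively.simps)

lemma avg_weight_Cons: "avg_weight u (v # xs) i = walk_weight u xs i / real (length xs)"
  by (simp add: avg_weight_def walk_weight_def sum_list_sum_nth atLeast0LessThan)

text \<open>Players \<open>j, j + 1, \<dots>\<close> (mod \<open>k\<close>) switch from \<open>b\<close> to \<open>c\<close> one after the other.\<close>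
lemma gg_walk_between_profiles:
  assumes k: "k \<ge> 1" and b: "b \<in> (\<Pi>\<^sub>E l\<in>{..<k}. A l)" and c: "c \<in> (\<Pi>\<^sub>E l\<in>{..<k}. A l)"
    and j: "j < k"
  shows "\<exists>xs. gg_walk k A (b, j) xs (c, j) \<and> length xs = k"
proof -
  define S where "S m = (\<lambda>m'. (j + m') mod k) ` {..<m}" for m
  define f where "f m = ((\<lambda>l. if l \<in> S m then c l else b l), (j + m) mod k)" for m
  have S_Suc: "S (Suc m) = insert ((j + m) mod k) (S m)" for m
    by (simp add: S_def lessThan_Suc)
  have vertex: "gg_vertex k A (f m)" for m
  proof -
    have "S m \<subseteq> {..<k}" using k by (auto simp: S_def)
    then have "(\<lambda>l. if l \<in> S m then c l else b l) \<in> (\<Pi>\<^sub>E l\<in>{..<k}. A l)"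
      using b c by (auto simp: PiE_iff extensional_def)
    then show ?thesis using k by (simp add: gg_vertex_def f_def)
  qed
  have "gg_edge k A (f m) (f (Suc m))" for m
    unfolding gg_edge_def using vertex[of m] vertex[of "Suc m"]
    by (simp del: Pair_inject) (auto simp: f_def S_Suc mod_Suc_eq)
  then have "gg_walk k A (f 0) (map f [Suc 0..<Suc k]) (f k)"
    using gg_walk_map_upt[of 0 k k A f] by simp
  moreover have "f 0 = (b, j)" using j by (simp add: f_def S_def)
  moreover have "f k = (c, j)"
  proof -
    have "l \<in> S k" if l: "l < k" for l
    proof -
      have "(j + (l + k - j) mod k) mod k = (l + k) mod k" using j by (simp add: mod_add_right_eq)
      then show ?thesis using k l unfolding S_def by (intro image_eqI[of _ _ "(l + k - j) mod k"]) auto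
    qed
    moreover have "c l = b l" if "\<not> l < k" for l
      using b c that by (auto simp: PiE_iff extensional_def)
    ultimately have "(\<lambda>l. if l \<in> S k then c l else b l) = c"
      by (intro ext) (metis (full_types))
    then show ?thesis using j by (simp add: f_def)
  qed
  ultimately show ?thesis by (intro exI[of _ "map f [Suc 0..<Suc k]"]) simp
qed

lemma recent_action_snoc:
  "recent_action k (xs @ [x]) j = (if mover k (length xs + 1) = j then x else recent_action k xs j)"
proof -
  have "[(xs @ [x]) ! r. r \<leftarrow> [0..<length xs], mover k (r + 1) = j] =
        [xs ! r. r \<leftarrow> [0..<length xs], mover k (r + 1) = j]"
    by (intro arg_cong[where f=concat] map_cong) (auto simp: nth_append)
  then show ?thesis unfolding recent_action_def by simp
qed

lemma recent_action_mem:
  assumes k: "k \<ge> 1" and len: "length g \<ge> k" and j: "j < k"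
    and g: "\<And>r. r < length g \<Longrightarrow> g ! r \<in> A (mover k (r + 1))"
  shows "recent_action k g j \<in> A j"
proof -
  define L where "L = [g ! r. r \<leftarrow> [0..<length g], mover k (r + 1) = j]"
  have set_L: "set L = {g ! r | r. r < length g \<and> mover k (r + 1) = j}"
    unfolding L_def by auto
  have "(if j = 0 then k - 1 else j - 1) < length g" "mover k ((if j = 0 then k - 1 else j - 1) + 1) = j"
    using k len j by (auto simp: mover_def)
  then have "L \<noteq> []" using set_L by auto
  then have "last L \<in> set L" by simp
  then show ?thesis using g set_L unfolding recent_action_def L_def[symmetric] by auto
qed

lemma action_vector_PiE:
  assumes "k \<ge> 1" "length g \<ge> k" "\<And>r. r < length g \<Longrightarrow> g ! r \<in> A (mover k (r + 1))"
  shows "action_vector k g \<in> (\<Pi>\<^sub>E j\<in>{..<k}. A j)"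
  using recent_action_mem[OF assms(1,2) _ assms(3)] by (auto simp: action_vector_def PiE_iff extensional_def)

lemma set_pmf_history_pmf:
  assumes k: "k \<ge> 1" and \<sigma>: "mixed_profile k A \<sigma>"
  shows "h \<in> set_pmf (history_pmf k \<sigma> t) \<Longrightarrow> length h = t \<and> (\<forall>r<t. h ! r \<in> A (mover k (r + 1)))"
proof (induction t arbitrary: h)
  case (Suc t)
  then obtain h' x where h': "h' \<in> set_pmf (history_pmf k \<sigma> t)"
    and x: "x \<in> set_pmf (\<sigma> (mover k (Suc t)) h')" and h: "h = h' @ [x]" by auto
  have "mover k (Suc t) < k" using k by (simp add: mover_def)
  then have "x \<in> A (mover k (Suc t))" using \<sigma> x by (auto simp: mixed_profile_def)
  then show ?case using Suc.IH[OF h'] h by (auto simp: nth_append less_Suc_eq)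
qed simp

lemma finite_set_pmf_history_pmf:
  assumes k: "k \<ge> 1" and \<sigma>: "mixed_profile k A \<sigma>" and fin: "\<And>j. j < k \<Longrightarrow> finite (A j)"
  shows "finite (set_pmf (history_pmf k \<sigma> t))"
proof (induction t)
  case (Suc t)
  have "mover k (Suc t) < k" using k by (simp add: mover_def)
  then have "finite (set_pmf (\<sigma> (mover k (Suc t)) h))" for h
    using \<sigma> fin by (meson finite_subset mixed_profile_def)
  then show ?case using Suc by simp
qed simp

definition history_vertex :: "nat \<Rightarrow> 'a list \<Rightarrow> nat \<Rightarrow> (nat \<Rightarrow> 'a) \<times> nat" where
  "history_vertex k h s = (action_vector k (take s h), (s + 1) mod k)"

definition cumulative_utility ::
  "nat \<Rightarrow> (nat \<Rightarrow> (nat \<Rightarrow> 'a) \<Rightarrow> real) \<Rightarrow> nat \<Rightarrow> nat \<Rightarrow> 'a list \<Rightarrow> real" where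
  "cumulative_utility k u i t h = (\<Sum>s\<in>{1..t}. round_utility k u i (take s h))"

lemma gg_walk_history:
  assumes k: "k \<ge> 1" and len: "length h = t" and kt: "k \<le> t"
    and h: "\<And>r. r < t \<Longrightarrow> h ! r \<in> A (mover k (r + 1))"
  shows "gg_walk k A (history_vertex k h k) (map (history_vertex k h) [Suc k..<Suc t])
    (history_vertex k h t)"
proof (rule gg_walk_map_upt[OF _ kt])
  fix m assume m: "k \<le> m" "m < t"
  have vertex: "gg_vertex k A (history_vertex k h s)" if "k \<le> s" "s \<le> t" for s
  proof -
    have "action_vector k (take s h) \<in> (\<Pi>\<^sub>E j\<in>{..<k}. A j)"
      using that len h by (intro action_vector_PiE[OF k]) auto
    then show ?thesis using k by (simp add: gg_vertex_def history_vertex_def)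
  qed
  have "take (Suc m) h = take m h @ [h ! m]" using m len by (simp add: take_Suc_conv_app_nth)
  then have "action_vector k (take m h) l = action_vector k (take (Suc m) h) l"
    if "l \<noteq> (m + 1) mod k" for l
    using that m len by (auto simp: action_vector_def recent_action_snoc mover_def)
  then show "gg_edge k A (history_vertex k h m) (history_vertex k h (Suc m))"
    using vertex[of m] vertex[of "Suc m"] m
    by (simp add: gg_edge_def history_vertex_def mod_Suc_eq)
qed

lemma walk_weight_history:
  assumes "length h = t" "k \<le> t"
  shows "walk_weight u (map (history_vertex k h) [Suc k..<Suc t]) i = cumulative_utility k u i t h"
proof -
  have "walk_weight u (map (history_vertex k h) [Suc k..<Suc t]) i =
      (\<Sum>s\<in>{Suc k..<Suc t}. u i (action_vector k (take s h)))"
    by (simp add: walk_weight_def history_vertex_def o_def interv_sum_list_conv_sum_set_nat)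
  also have "\<dots> = (\<Sum>s\<in>{s \<in> {1..t}. k < s}. u i (action_vector k (take s h)))"
    by (intro sum.cong) auto
  also have "\<dots> = (\<Sum>s\<in>{1..t}. if k < s then u i (action_vector k (take s h)) else 0)"
    by (rule sum.inter_filter) simp
  also have "\<dots> = cumulative_utility k u i t h"
    unfolding cumulative_utility_def using assms by (intro sum.cong) (auto simp: round_utility_def)
  finally show ?thesis .
qed

lemma abs_cumulative_utility_le:
  assumes k: "k \<ge> 1" and \<sigma>: "mixed_profile k A \<sigma>" and i: "i < k"
    and u_bound: "\<And>i a. i < k \<Longrightarrow> a \<in> (\<Pi>\<^sub>E j\<in>{..<k}. A j) \<Longrightarrow> \<bar>u i a\<bar> \<le> 1"
    and h: "h \<in> set_pmf (history_pmf k \<sigma> t)"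
  shows "\<bar>cumulative_utility k u i t h\<bar> \<le> real t"
proof -
  have "\<bar>round_utility k u i (take s h)\<bar> \<le> 1" if s: "s \<in> {1..t}" for s
  proof (cases "s \<le> k")
    case False
    then have "action_vector k (take s h) \<in> (\<Pi>\<^sub>E j\<in>{..<k}. A j)"
      using s set_pmf_history_pmf[OF k \<sigma> h] by (intro action_vector_PiE[OF k]) auto
    then show ?thesis using u_bound[OF i] by (simp add: round_utility_def)
  qed (use s set_pmf_history_pmf[OF k \<sigma> h] in \<open>simp add: round_utility_def\<close>)
  then have "\<bar>cumulative_utility k u i t h\<bar> \<le> (\<Sum>s\<in>{1..t}. 1)"
    unfolding cumulative_utility_def by (intro order_trans[OF sum_abs] sum_mono) auto
  then show ?thesis by simp
qed

lemma avg_payoff_eq_sum: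
  assumes "k \<ge> 1" "mixed_profile k A \<sigma>" "\<And>j. j < k \<Longrightarrow> finite (A j)"
  shows "avg_payoff k u \<sigma> i t = (\<Sum>h\<in>set_pmf (history_pmf k \<sigma> t).
    pmf (history_pmf k \<sigma> t) h * cumulative_utility k u i t h) / real t"
  unfolding avg_payoff_def cumulative_utility_def[symmetric]
  by (subst integral_measure_pmf_real[OF finite_set_pmf_history_pmf[OF assms]])
    (auto simp: sum_divide_distrib intro!: sum.cong)

lemma avg_payoff_le_1:
  assumes k: "k \<ge> 1" and \<sigma>: "mixed_profile k A \<sigma>" and fin: "\<And>j. j < k \<Longrightarrow> finite (A j)"
    and i: "i < k" and u_bound: "\<And>i a. i < k \<Longrightarrow> a \<in> (\<Pi>\<^sub>E j\<in>{..<k}. A j) \<Longrightarrow> \<bar>u i a\<bar> \<le> 1"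
  shows "avg_payoff k u \<sigma> i t \<le> 1"
proof -
  let ?H = "set_pmf (history_pmf k \<sigma> t)" and ?p = "pmf (history_pmf k \<sigma> t)"
  have "cumulative_utility k u i t h \<le> real t" if "h \<in> ?H" for h
    using abs_cumulative_utility_le[OF k \<sigma> i, where u = u, OF u_bound that] by simp
  then have "(\<Sum>h\<in>?H. ?p h * cumulative_utility k u i t h) \<le> (\<Sum>h\<in>?H. ?p h * real t)"
    by (intro sum_mono mult_left_mono) auto
  also have "\<dots> = real t"
    using sum_pmf_eq_1[OF finite_set_pmf_history_pmf[OF k \<sigma> fin] order_refl]
    by (simp add: sum_distrib_right[symmetric])
  finally show ?thesis
    using avg_payoff_eq_sum[OF k \<sigma> fin] by (cases "t = 0") (auto simp: divide_le_eq_1)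
qed

text \<open>Splice the play of the first \<open>t\<close> rounds between two walks through the fixed
  profile \<open>c\<close>; each splice costs at most \<open>k\<close> per coordinate. Since \<open>k\<close> divides \<open>t\<close>,
  the play starts and ends with the same mover.\<close>
lemma history_closed_walk:
  assumes k: "k \<ge> 1" and \<sigma>: "mixed_profile k A \<sigma>"
    and u_bound: "\<And>i a. i < k \<Longrightarrow> a \<in> (\<Pi>\<^sub>E j\<in>{..<k}. A j) \<Longrightarrow> \<bar>u i a\<bar> \<le> 1"
    and h: "h \<in> set_pmf (history_pmf k \<sigma> t)" and kt: "k \<le> t" and t: "t mod k = 0"
    and c: "c \<in> (\<Pi>\<^sub>E j\<in>{..<k}. A j)"
  shows "\<exists>C. gg_walk k A (c, 1 mod k) C (c, 1 mod k) \<and> length C = t + k \<and>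
    (\<forall>i<k. walk_weight u C i \<ge> cumulative_utility k u i t h - 2 * real k)"
proof -
  have len: "length h = t" and h_mem: "\<And>r. r < t \<Longrightarrow> h ! r \<in> A (mover k (r + 1))"
    using set_pmf_history_pmf[OF k \<sigma> h] by auto
  let ?a = "action_vector k (take k h)" and ?b = "action_vector k (take t h)"
  have a: "?a \<in> (\<Pi>\<^sub>E j\<in>{..<k}. A j)" and b: "?b \<in> (\<Pi>\<^sub>E j\<in>{..<k}. A j)"
    using len h_mem kt by (auto intro!: action_vector_PiE[OF k])
  have j: "1 mod k < k" using k by simp
  obtain C1 where C1: "gg_walk k A (c, 1 mod k) C1 (?a, 1 mod k)" "length C1 = k"
    using gg_walk_between_profiles[OF k c a j] by blast
  obtain C3 where C3: "gg_walk k A (?b, 1 mod k) C3 (c, 1 mod k)" "length C3 = k"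
    using gg_walk_between_profiles[OF k b c j] by blast
  define C2 where "C2 = map (history_vertex k h) [Suc k..<Suc t]"
  have "(k + 1) mod k = 1 mod k" by (rule mod_add_self1)
  then have start: "history_vertex k h k = (?a, 1 mod k)" by (simp only: history_vertex_def)
  have "(t + 1) mod k = 1 mod k" using mod_add_left_eq[of t k 1] t by simp
  then have stop: "history_vertex k h t = (?b, 1 mod k)" by (simp only: history_vertex_def)
  have C2: "gg_walk k A (?a, 1 mod k) C2 (?b, 1 mod k)"
    using gg_walk_history[OF k len kt h_mem] unfolding C2_def start stop .
  have "walk_weight u (C1 @ C2 @ C3) i \<ge> cumulative_utility k u i t h - 2 * real k"
    if i: "i < k" for i
    using abs_walk_weight_le[OF C1(1) i, where u = u, OF u_bound]
      abs_walk_weight_le[OF C3(1) i, where u = u, OF u_bound]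
      walk_weight_history[OF len kt, of u i] C1(2) C3(2)
    by (simp add: walk_weight_append C2_def)
  moreover have "length (C1 @ C2 @ C3) = t + k" using C1(2) C3(2) kt by (simp add: C2_def)
  ultimately show ?thesis using gg_walk_append[OF C1(1) gg_walk_append[OF C2 C3(1)]] by blast
qed

text \<open>Repeating each closed walk \<open>C h\<close> about \<open>p h\<close> times realises the mixture of their
  averages up to \<open>\<epsilon>\<close>.\<close>
lemma cyclic_path_mixture:
  assumes fin: "finite H" and p_nonneg: "\<And>h. h \<in> H \<Longrightarrow> p h \<ge> 0" and p_sum: "sum p H = 1"
    and walk: "\<And>h. h \<in> H \<Longrightarrow> gg_walk k A v (C h) v"
    and len: "\<And>h. h \<in> H \<Longrightarrow> length (C h) = L" and L: "L > 0"
    and u_bound: "\<And>i a. i < k \<Longrightarrow> a \<in> (\<Pi>\<^sub>E j\<in>{..<k}. A j) \<Longrightarrow> \<bar>u i a\<bar> \<le> 1"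
    and \<epsilon>: "\<epsilon> > 0"
  shows "\<exists>q. cyclic_path k A q \<and>
    (\<forall>i<k. avg_weight u q i \<ge> (\<Sum>h\<in>H. p h * walk_weight u (C h) i) / real L - \<epsilon>)"
proof -
  define x where "x h i = walk_weight u (C h) i / real L" for h i
  have x_bound: "\<bar>x h i\<bar> \<le> 1" if "h \<in> H" "i \<in> {..<k}" for h i
    using abs_walk_weight_le[OF walk, where u = u, OF _ _ u_bound] that len L by (simp add: x_def abs_divide)
  have "\<exists>n. sum n H > 0 \<and> (\<forall>i\<in>{..<k}.
      (\<Sum>h\<in>H. real (n h) * x h i) \<ge> ((\<Sum>h\<in>H. p h * x h i) - \<epsilon>) * real (sum n H))"
    by (rule nat_weights_approx_convex_combination[OF fin p_nonneg p_sum x_bound \<epsilon>])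
  then obtain n where n_pos: "sum n H > 0" and n: "\<forall>i\<in>{..<k}.
      (\<Sum>h\<in>H. real (n h) * x h i) \<ge> ((\<Sum>h\<in>H. p h * x h i) - \<epsilon>) * real (sum n H)"
    by blast
  obtain hs where hs: "distinct hs" "set hs = H" using finite_distinct_list[OF fin] by blast
  define W where "W = concat (map (\<lambda>h. concat (replicate (n h) (C h))) hs)"
  have W_walk: "gg_walk k A v W v"
    unfolding W_def using hs walk by (auto intro!: gg_walk_concat)
  have W_weight: "walk_weight u W i = (\<Sum>h\<in>H. real (n h) * walk_weight u (C h) i)" for i
    unfolding W_def walk_weight_concat
    by (simp add: o_def walk_weight_concat_replicate sum_list_distinct_conv_sum_set hs)
  have W_length: "length W = sum n H * L"
    unfolding W_def using hs len
    by (simp add: length_concat o_def sum_list_replicate sum_list_distinct_conv_sum_set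
        sum_distrib_right)
  have "avg_weight u (v # W) i \<ge> (\<Sum>h\<in>H. p h * walk_weight u (C h) i) / real L - \<epsilon>"
    if i: "i < k" for i
  proof -
    have "avg_weight u (v # W) i = (\<Sum>h\<in>H. real (n h) * x h i) / real (sum n H)"
      by (simp add: avg_weight_Cons W_weight W_length x_def sum_divide_distrib
          divide_divide_eq_left mult.commute)
    moreover have "(\<Sum>h\<in>H. p h * x h i) = (\<Sum>h\<in>H. p h * walk_weight u (C h) i) / real L"
      by (simp add: x_def sum_divide_distrib)
    moreover have "real (sum n H) > 0" using n_pos by (simp only: of_nat_0_less_iff)
    ultimately show ?thesis using n[rule_format, of i] i by (simp add: le_divide_eq)
  qed
  moreover have "W \<noteq> []" using W_length n_pos L by auto
  ultimately show ?thesis using cyclic_path_closed_walk[OF W_walk] by blast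
qed

lemma cyclic_path_near_avg_payoff:
  assumes k: "k \<ge> 1" and fin: "\<And>j. j < k \<Longrightarrow> finite (A j)"
    and u_bound: "\<And>i a. i < k \<Longrightarrow> a \<in> (\<Pi>\<^sub>E j\<in>{..<k}. A j) \<Longrightarrow> \<bar>u i a\<bar> \<le> 1"
    and \<sigma>: "mixed_profile k A \<sigma>" and kt: "k \<le> t" and t: "t mod k = 0" and \<epsilon>: "\<epsilon> > 0"
  shows "\<exists>q. cyclic_path k A q \<and>
    (\<forall>i<k. avg_weight u q i \<ge> avg_payoff k u \<sigma> i t - 3 * real k / real (t + k) - \<epsilon>)"
proof -
  let ?H = "set_pmf (history_pmf k \<sigma> t)" and ?p = "pmf (history_pmf k \<sigma> t)"
  have H: "finite ?H" by (rule finite_set_pmf_history_pmf[OF k \<sigma> fin])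
  have p_sum: "sum ?p ?H = 1" by (rule sum_pmf_eq_1[OF H order_refl])
  have "A j \<noteq> {}" if "j < k" for j
    using \<sigma> that set_pmf_not_empty[of "\<sigma> j []"] by (auto simp: mixed_profile_def)
  then have "(\<Pi>\<^sub>E j\<in>{..<k}. A j) \<noteq> {}" by (simp add: PiE_eq_empty_iff)
  then obtain c where c: "c \<in> (\<Pi>\<^sub>E j\<in>{..<k}. A j)" by blast
  have "\<forall>h\<in>?H. \<exists>C. gg_walk k A (c, 1 mod k) C (c, 1 mod k) \<and> length C = t + k \<and>
      (\<forall>i<k. walk_weight u C i \<ge> cumulative_utility k u i t h - 2 * real k)"
    using history_closed_walk[where u = u, OF k \<sigma> u_bound _ kt t c] by blast
  then obtain C where C: "\<forall>h\<in>?H. gg_walk k A (c, 1 mod k) (C h) (c, 1 mod k) \<and>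
      length (C h) = t + k \<and>
      (\<forall>i<k. walk_weight u (C h) i \<ge> cumulative_utility k u i t h - 2 * real k)"
    by (rule bchoice[elim_format]) blast
  have "\<exists>q. cyclic_path k A q \<and>
      (\<forall>i<k. avg_weight u q i \<ge> (\<Sum>h\<in>?H. ?p h * walk_weight u (C h) i) / real (t + k) - \<epsilon>)"
    using C k by (intro cyclic_path_mixture[where u = u, OF H _ p_sum _ _ _ u_bound \<epsilon>]) auto
  then obtain q where q: "cyclic_path k A q" and q_avg: "\<forall>i<k.
      avg_weight u q i \<ge> (\<Sum>h\<in>?H. ?p h * walk_weight u (C h) i) / real (t + k) - \<epsilon>"
    by blast
  have "(\<Sum>h\<in>?H. ?p h * walk_weight u (C h) i) / real (t + k) \<ge>
      avg_payoff k u \<sigma> i t - 3 * real k / real (t + k)" if i: "i < k" for i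
  proof -
    let ?P = "avg_payoff k u \<sigma> i t"
    have "real t * ?P - 2 * real k = (\<Sum>h\<in>?H. ?p h * (cumulative_utility k u i t h - 2 * real k))"
      using avg_payoff_eq_sum[OF k \<sigma> fin, of u i t] kt k p_sum
      by (simp add: right_diff_distrib sum_subtractf sum_distrib_right[symmetric])
    also have "\<dots> \<le> (\<Sum>h\<in>?H. ?p h * walk_weight u (C h) i)"
      using C i by (intro sum_mono mult_left_mono) (auto simp: pmf_nonneg)
    finally have "real t * ?P - 2 * real k \<le> (\<Sum>h\<in>?H. ?p h * walk_weight u (C h) i)" .
    moreover have "real k * ?P \<le> real k"
      using avg_payoff_le_1[where u = u, OF k \<sigma> fin i u_bound] by (simp add: mult_left_le)
    ultimately have "real (t + k) * ?P - 3 * real k \<le> (\<Sum>h\<in>?H. ?p h * walk_weight u (C h) i)"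
      by (simp add: algebra_simps)
    then have "(real (t + k) * ?P - 3 * real k) / real (t + k) \<le>
        (\<Sum>h\<in>?H. ?p h * walk_weight u (C h) i) / real (t + k)"
      by (rule divide_right_mono) simp
    moreover have "(real (t + k) * ?P - 3 * real k) / real (t + k) = ?P - 3 * real k / real (t + k)"
      using k by (simp add: diff_divide_distrib)
    ultimately show ?thesis by simp
  qed
  with q q_avg show ?thesis by fastforce
qed

lemma eventually_liminf_minus_le:
  fixes f :: "nat \<Rightarrow> real"
  assumes bound: "\<And>t. f t \<le> B" and \<epsilon>: "\<epsilon> > 0"
  shows "eventually (\<lambda>t. liminf (\<lambda>t. ereal (f t)) - ereal \<epsilon> \<le> ereal (f t)) sequentially"
proof (cases "liminf (\<lambda>t. ereal (f t))")
  case (real r)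
  have "ereal (r - \<epsilon>) < liminf (\<lambda>t. ereal (f t))" using real \<epsilon> by simp
  then have "eventually (\<lambda>t. ereal (r - \<epsilon>) < ereal (f t)) sequentially" by (rule less_LiminfD)
  then show ?thesis by (rule eventually_mono) (simp add: real)
next
  case PInf
  then have "eventually (\<lambda>t. ereal B < ereal (f t)) sequentially" by (intro less_LiminfD) simp
  then show ?thesis by (rule eventually_mono) (use bound in \<open>simp add: not_less[symmetric]\<close>)
qed simp

lemma exists_multiple_with_small_ratio:
  fixes k T :: nat and \<delta> :: real
  assumes k: "k \<ge> 1" and \<delta>: "\<delta> > 0"
  shows "\<exists>t. T \<le> t \<and> k \<le> t \<and> t mod k = 0 \<and> real k / real (t + k) \<le> \<delta>"
proof -
  define m where "m = T + nat \<lceil>1 / \<delta>\<rceil> + 1"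
  have "1 / \<delta> \<le> real (m + 1)" unfolding m_def by linarith
  then have "1 / real (m + 1) \<le> \<delta>" using \<delta> by (simp add: divide_le_eq mult.commute)
  moreover have "real k / real (k * m + k) = 1 / real (m + 1)"
  proof -
    have "real (k * m + k) = real k * real (m + 1)" by (simp add: algebra_simps)
    then show ?thesis using k by simp
  qed
  moreover have "T \<le> k * m" "k \<le> k * m" using mult_le_mono1[OF k, of m] by (simp_all add: m_def)
  ultimately show ?thesis by (intro exI[of _ "k * m"]) auto
qed

theorem lemma6:
  fixes k :: nat and A :: "nat \<Rightarrow> 'a set"
    and u :: "nat \<Rightarrow> (nat \<Rightarrow> 'a) \<Rightarrow> real"
    and \<sigma> :: "nat \<Rightarrow> 'a list \<Rightarrow> 'a pmf"
    and \<alpha> :: real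
  assumes "k \<ge> 1"
    and "\<And>j. j < k \<Longrightarrow> finite (A j)"
    and "\<And>i a. i < k \<Longrightarrow> a \<in> (\<Pi>\<^sub>E j\<in>{..<k}. A j) \<Longrightarrow> \<bar>u i a\<bar> \<le> 1"
    and "mixed_profile k A \<sigma>"
    and "\<alpha> > 0"
  shows "\<exists>p. cyclic_path k A p \<and>
           (\<forall>i<k. game_utility k u \<sigma> i - ereal \<alpha> \<le> ereal (avg_weight u p i))"
proof -
  note k = assms(1) and fin = assms(2) and u_bound = assms(3) and \<sigma> = assms(4) and \<alpha> = assms(5)
  have "eventually (\<lambda>t. \<forall>i\<in>{..<k}.
      game_utility k u \<sigma> i - ereal (\<alpha> / 2) \<le> ereal (avg_payoff k u \<sigma> i t)) sequentially"
    unfolding game_utility_def using avg_payoff_le_1[where u = u, OF k \<sigma> fin _ u_bound] \<alpha>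
    by (intro eventually_ball_finite ballI eventually_liminf_minus_le[where B = 1]) auto
  then obtain T where T: "\<And>t i. t \<ge> T \<Longrightarrow> i < k \<Longrightarrow>
      game_utility k u \<sigma> i - ereal (\<alpha> / 2) \<le> ereal (avg_payoff k u \<sigma> i t)"
    unfolding eventually_sequentially by blast
  obtain t where t: "T \<le> t" "k \<le> t" "t mod k = 0" and small: "real k / real (t + k) \<le> \<alpha> / 12"
    using exists_multiple_with_small_ratio[OF k, of "\<alpha> / 12" T] \<alpha> by auto
  obtain q where q: "cyclic_path k A q" and q_avg: "\<forall>i<k. avg_weight u q i \<ge>
      avg_payoff k u \<sigma> i t - 3 * real k / real (t + k) - \<alpha> / 4"
    using cyclic_path_near_avg_payoff[where u = u and \<epsilon> = "\<alpha> / 4", OF k fin u_bound \<sigma> t(2,3)] \<alpha>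
    by auto
  have "game_utility k u \<sigma> i - ereal \<alpha> \<le> ereal (avg_weight u q i)" if "i < k" for i
    using T[OF t(1) that] q_avg that small by (cases "game_utility k u \<sigma> i") auto
  with q show ?thesis by blast
qed

end
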